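(* Let $j_0<j_f$ and let $\phi^*=(\phi^*_{j_0},\dots,\phi^*_{j_f-1})$ be the slot allocation of an optimal schedule for $\mathcal{D}(\theta_{j_0},\theta_{j_f})$, i.e. $n\phi^*_j$ is the number of bits transmitted in slot $j$ by an admissible schedule achieving $\mathcal{D}(\theta_{j_0},\theta_{j_f})=n\sum_j\phi^*_j$, where bits of each slot are transmitted back-to-back from the earliest available time. For $t\in[\theta_{j_0},\theta_{j_0+1})$ define $$\hat{\mathcal{D}}(t,\theta_{j_f}):=\max\big\{0,\ n\lfloor\phi^*_{j_0}-R_{j_0}(t-\theta_{j_0})\rfloor\big\}+n\sum_{j=j_0+1}^{j_f-1}\phi^*_j.$$ Then $0\le\mathcal{D}(t,\theta_{j_f})-\hat{\mathcal{D}}(t,\theta_{j_f})\le n$.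
   Context: The channel is described by $R$ and $\bar p$, piecewise constant: there is a strictly increasing sequence $\{\theta_j\}_{j\ge0}$ with $R(t)=R_j>0$ and $\bar p(t)=\bar\pi_j\in\mathbb{Z}_{\ge0}$ for $t\in I_j:=(\theta_j,\theta_{j+1}]$; $n\in\mathbb{Z}_{>0}$. A transmission at time $t_k$ of $np_k$ bits ($p_k\in\mathbb{Z}_{\ge0}$) is admissible if $p_k\le\bar p(t_k)$; it is received after $\Delta(t_k,p_k):=p_k/R(t_k)$ time (worst case), and $t_{k+1}\ge t_k+\Delta(t_k,p_k)$, $t_1<t_2<\cdots$. The data capacity $\mathcal{D}(\tau_1,\tau_2)$ is the maximum over all admissible sequences of $n\sum_kp_k$, the sum over $k$ with $t_k\ge\tau_1$ and $t_k+\Delta(t_k,p_k)\le\tau_2$. *)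

theory Defs
  imports Complex_Main
begin

text \<open>The slot boundaries are given by theta (strictly increasing),
  slot j is the interval I_j = (theta j, theta (j+1)], the rate on slot j is R j and
  the maximal admissible packet count on slot j is pbar j.\<close>

definition in_slot :: "(nat \<Rightarrow> real) \<Rightarrow> nat \<Rightarrow> real \<Rightarrow> bool" where
  "in_slot \<theta> j t \<longleftrightarrow> \<theta> j < t \<and> t \<le> \<theta> (Suc j)"

definition slot_of :: "(nat \<Rightarrow> real) \<Rightarrow> real \<Rightarrow> nat" where
  "slot_of \<theta> t = (THE j. in_slot \<theta> j t)"

definition Delta :: "(nat \<Rightarrow> real) \<Rightarrow> (nat \<Rightarrow> real) \<Rightarrow> real \<Rightarrow> nat \<Rightarrow> real" where
  "Delta \<theta> R t p = real p / R (slot_of \<theta> t)"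

text \<open>A transmission sequence is a list of pairs (t_k, p_k): at time t_k, n*p_k bits are sent.\<close>
definition admissible_seq ::
  "(nat \<Rightarrow> real) \<Rightarrow> (nat \<Rightarrow> real) \<Rightarrow> (nat \<Rightarrow> nat) \<Rightarrow> (real \<times> nat) list \<Rightarrow> bool" where
  "admissible_seq \<theta> R pbar s \<longleftrightarrow>
     (\<forall>k < length s. (\<exists>j. in_slot \<theta> j (fst (s!k))) \<and> snd (s!k) \<le> pbar (slot_of \<theta> (fst (s!k)))) \<and>
     (\<forall>k. Suc k < length s \<longrightarrow>
        fst (s!k) < fst (s!Suc k) \<and>
        fst (s!k) + Delta \<theta> R (fst (s!k)) (snd (s!k)) \<le> fst (s!Suc k))"

definition in_window ::
  "(nat \<Rightarrow> real) \<Rightarrow> (nat \<Rightarrow> real) \<Rightarrow> real \<Rightarrow> real \<Rightarrow> (real \<times> nat) list \<Rightarrow> nat set" where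
  "in_window \<theta> R \<tau>1 \<tau>2 s = {k. k < length s \<and> \<tau>1 \<le> fst (s!k) \<and>
                                 fst (s!k) + Delta \<theta> R (fst (s!k)) (snd (s!k)) \<le> \<tau>2}"

definition window_count ::
  "(nat \<Rightarrow> real) \<Rightarrow> (nat \<Rightarrow> real) \<Rightarrow> real \<Rightarrow> real \<Rightarrow> (real \<times> nat) list \<Rightarrow> nat" where
  "window_count \<theta> R \<tau>1 \<tau>2 s = (\<Sum>k \<in> in_window \<theta> R \<tau>1 \<tau>2 s. snd (s!k))"

definition data_capacity ::
  "(nat \<Rightarrow> real) \<Rightarrow> (nat \<Rightarrow> real) \<Rightarrow> (nat \<Rightarrow> nat) \<Rightarrow> nat \<Rightarrow> real \<Rightarrow> real \<Rightarrow> nat" where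
  "data_capacity \<theta> R pbar n \<tau>1 \<tau>2 =
     Sup {n * window_count \<theta> R \<tau>1 \<tau>2 s | s. admissible_seq \<theta> R pbar s}"

definition slot_alloc ::
  "(nat \<Rightarrow> real) \<Rightarrow> (nat \<Rightarrow> real) \<Rightarrow> real \<Rightarrow> real \<Rightarrow> (real \<times> nat) list \<Rightarrow> nat \<Rightarrow> nat" where
  "slot_alloc \<theta> R \<tau>1 \<tau>2 s j =
     (\<Sum>k \<in> {k \<in> in_window \<theta> R \<tau>1 \<tau>2 s. in_slot \<theta> j (fst (s!k))}. snd (s!k))"

end

theory Submission
  imports Defs
begin

(* Let x = R_j0 (t - theta_j0) and let phi = phi_j0 be the load of slot j0 in the optimal schedule.
   Lower bound: the transmissions of the optimal schedule that start after slot j0 stay feasible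
   in the window starting at t. The phi packets of slot j0 are sent in disjoint intervals inside
   (theta_j0, e], e the finish of the last of them, so e - phi/R_j0 > theta_j0 and floor (phi - x)
   packets still fit into [t, e]: as one transmission, or as that last transmission preceded by
   single packets.
   Upper bound: if pbar_j0 > 0 (otherwise phi = 0), every schedule for the window starting at t
   can be preceded by ceiling x - 1 single packets in (theta_j0, t), so
   D(t) + n (ceiling x - 1) <= D(theta_j0) = n * sum phi_j.
   The gap is at most n because phi <= (ceiling x - 1) + floor (phi - x) + 1. *)

lemma sum_durations_le_span:
  fixes s d :: "'a \<Rightarrow> real"
  assumes "finite A" "inj_on s A"
    and "\<forall>a\<in>A. \<forall>b\<in>A. s a < s b \<longrightarrow> s a + d a \<le> s b"
    and "\<forall>a\<in>A. lo \<le> s a \<and> s a + d a \<le> hi" "lo \<le> hi"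
  shows "(\<Sum>a\<in>A. d a) \<le> hi - lo"
  using assms
proof (induction "card A" arbitrary: A hi)
  case 0
  then show ?case by simp
next
  case (Suc N)
  then have "A \<noteq> {}" by auto
  with \<open>finite A\<close> have "Max (s ` A) \<in> s ` A" by simp
  then obtain m where m: "m \<in> A" "s m = Max (s ` A)" by auto
  have before_m: "s a < s m" if "a \<in> A - {m}" for a
  proof -
    have "s a \<le> s m" using that m \<open>finite A\<close> by simp
    moreover have "s a \<noteq> s m" using that m(1) \<open>inj_on s A\<close> by (auto dest: inj_onD)
    ultimately show ?thesis by simp
  qed
  have "(\<Sum>a\<in>A - {m}. d a) \<le> s m - lo"
  proof (rule Suc.hyps)
    show "N = card (A - {m})" using Suc.hyps(2) m(1) by simp
    show "inj_on s (A - {m})" using \<open>inj_on s A\<close> by (rule inj_on_subset) blast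
    show "\<forall>a\<in>A - {m}. lo \<le> s a \<and> s a + d a \<le> s m"
      using Suc.prems(3,4) before_m m(1) by blast
  qed (use Suc.prems m(1) in \<open>simp_all add: Ball_def\<close>)
  moreover have "s m + d m \<le> hi" using Suc.prems(4) m(1) by blast
  ultimately show ?case using \<open>finite A\<close> m(1) by (simp add: sum.remove)
qed

lemma max_0_mult_of_int: "max 0 (real n * of_int z) = real n * real (nat z)"
proof (cases "z \<ge> 0")
  case False
  then have "real n * of_int z \<le> 0" by (simp add: mult_nonneg_nonpos)
  with False show ?thesis by simp
qed simp

lemma le_nat_ceiling_pred_add_nat_floor: "m \<le> nat (\<lceil>x\<rceil> - 1) + nat \<lfloor>real m - x\<rfloor> + 1"
proof (cases "x \<le> real m")
  case True
  have "int m - \<lceil>x\<rceil> \<le> \<lfloor>real m - x\<rfloor>" by (simp add: le_floor_iff)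
  with True show ?thesis by linarith
next
  case False
  then have "int m + 1 \<le> \<lceil>x\<rceil>" by linarith
  then show ?thesis by linarith
qed

locale channel =
  fixes \<theta> :: "nat \<Rightarrow> real" and R :: "nat \<Rightarrow> real" and pbar :: "nat \<Rightarrow> nat"
  assumes theta_mono: "strict_mono \<theta>"
    and R_pos: "\<And>j. 0 < R j"
begin

lemma in_slot_less_iff:
  assumes "in_slot \<theta> j t"
  shows "\<theta> i < t \<longleftrightarrow> i \<le> j"
proof
  assume "\<theta> i < t"
  with assms have "\<theta> i < \<theta> (Suc j)" unfolding in_slot_def by linarith
  then show "i \<le> j" using theta_mono by (simp add: strict_mono_less)
next
  assume "i \<le> j"
  then have "\<theta> i \<le> \<theta> j" using theta_mono by (simp add: strict_mono_less_eq)
  with assms show "\<theta> i < t" unfolding in_slot_def by linarith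
qed

lemma slot_of_eqI:
  assumes "in_slot \<theta> j t"
  shows "slot_of \<theta> t = j"
  unfolding slot_of_def
proof (rule the_equality)
  fix i assume i: "in_slot \<theta> i t"
  have "\<theta> i < t" "\<theta> j < t" using i assms unfolding in_slot_def by auto
  then have "i \<le> j" "j \<le> i" using in_slot_less_iff i assms by blast+
  then show "i = j" by simp
qed fact

lemma Delta_nonneg: "0 \<le> Delta \<theta> R t p"
  unfolding Delta_def using R_pos[of "slot_of \<theta> t"] by simp

lemma Delta_in_slot: "in_slot \<theta> j t \<Longrightarrow> Delta \<theta> R t p = real p / R j"
  unfolding Delta_def by (simp add: slot_of_eqI)

subsection \<open>Schedules\<close>

definition admissible_tx :: "real \<times> nat \<Rightarrow> bool" where
  "admissible_tx a \<longleftrightarrow> (\<exists>j. in_slot \<theta> j (fst a)) \<and> snd a \<le> pbar (slot_of \<theta> (fst a))"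

definition finish :: "real \<times> nat \<Rightarrow> real" where
  "finish a = fst a + Delta \<theta> R (fst a) (snd a)"

(* The transmissions of an admissible sequence that are counted in the window [tau1, tau2],
   forgotten as a set: the order of the sequence is determined by the start times. *)
definition schedule :: "real \<Rightarrow> real \<Rightarrow> (real \<times> nat) set \<Rightarrow> bool" where
  "schedule \<tau>1 \<tau>2 A \<longleftrightarrow> finite A \<and> inj_on fst A \<and>
     (\<forall>a\<in>A. admissible_tx a \<and> \<tau>1 \<le> fst a \<and> finish a \<le> \<tau>2) \<and>
     (\<forall>a\<in>A. \<forall>b\<in>A. fst a < fst b \<longrightarrow> finish a \<le> fst b)"

definition load :: "(real \<times> nat) set \<Rightarrow> nat" where
  "load A = (\<Sum>a\<in>A. snd a)"

definition slot_load :: "(real \<times> nat) set \<Rightarrow> nat \<Rightarrow> nat" where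
  "slot_load A j = load {a\<in>A. in_slot \<theta> j (fst a)}"

lemma fst_le_finish: "fst a \<le> finish a"
  unfolding finish_def using Delta_nonneg by simp

lemma finish_in_slot: "in_slot \<theta> j (fst a) \<Longrightarrow> finish a = fst a + real (snd a) / R j"
  unfolding finish_def by (simp add: Delta_in_slot)

lemma admissible_tx_in_slot: "admissible_tx a \<Longrightarrow> in_slot \<theta> (slot_of \<theta> (fst a)) (fst a)"
  unfolding admissible_tx_def using slot_of_eqI by fastforce

lemma scheduleI:
  assumes "finite A" "inj_on fst A"
    and "\<And>a. a \<in> A \<Longrightarrow> admissible_tx a" "\<And>a. a \<in> A \<Longrightarrow> \<tau>1 \<le> fst a"
    and "\<And>a. a \<in> A \<Longrightarrow> finish a \<le> \<tau>2"
    and "\<And>a b. a \<in> A \<Longrightarrow> b \<in> A \<Longrightarrow> fst a < fst b \<Longrightarrow> finish a \<le> fst b"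
  shows "schedule \<tau>1 \<tau>2 A"
  using assms unfolding schedule_def by blast

lemma
  assumes "schedule \<tau>1 \<tau>2 A" "a \<in> A"
  shows schedule_admissible_tx: "admissible_tx a"
    and schedule_start_ge: "\<tau>1 \<le> fst a"
    and schedule_finish_le: "finish a \<le> \<tau>2"
  using assms unfolding schedule_def by simp_all

lemma schedule_finite: "schedule \<tau>1 \<tau>2 A \<Longrightarrow> finite A"
  unfolding schedule_def by simp

lemma schedule_inj_on_fst: "schedule \<tau>1 \<tau>2 A \<Longrightarrow> inj_on fst A"
  unfolding schedule_def by simp

lemma schedule_precedes:
  "schedule \<tau>1 \<tau>2 A \<Longrightarrow> a \<in> A \<Longrightarrow> b \<in> A \<Longrightarrow> fst a < fst b \<Longrightarrow> finish a \<le> fst b"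
  unfolding schedule_def by simp

lemma schedule_finish_mono:
  assumes sched: "schedule \<tau>1 \<tau>2 A" and "a \<in> A" "b \<in> A" "fst a \<le> fst b"
  shows "finish a \<le> finish b"
proof (cases "fst a < fst b")
  case True
  then show ?thesis using schedule_precedes[OF sched assms(2,3)] fst_le_finish[of b] by simp
next
  case False
  with assms(4) have "a = b" using schedule_inj_on_fst[OF sched] assms(2,3) by (auto dest: inj_onD)
  then show ?thesis by simp
qed

lemma schedule_empty: "schedule \<tau>1 \<tau>2 {}"
  by (simp add: schedule_def)

lemma schedule_subset: "schedule \<tau>1 \<tau>2 A \<Longrightarrow> B \<subseteq> A \<Longrightarrow> schedule \<tau>1 \<tau>2 B"
  unfolding schedule_def by (meson finite_subset inj_on_subset subsetD)

lemma schedule_later_start: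
  "schedule \<tau>1 \<tau>2 A \<Longrightarrow> (\<And>a. a \<in> A \<Longrightarrow> \<tau>1' \<le> fst a) \<Longrightarrow> schedule \<tau>1' \<tau>2 A"
  unfolding schedule_def by blast

lemma schedule_mono: "schedule \<tau>1 \<tau>2 A \<Longrightarrow> \<tau>1' \<le> \<tau>1 \<Longrightarrow> \<tau>2 \<le> \<tau>2' \<Longrightarrow> schedule \<tau>1' \<tau>2' A"
  unfolding schedule_def by force

lemma schedule_singleton:
  "admissible_tx a \<Longrightarrow> \<tau>1 \<le> fst a \<Longrightarrow> finish a \<le> \<tau>2 \<Longrightarrow> schedule \<tau>1 \<tau>2 {a}"
  by (simp add: schedule_def)

lemma schedule_append:
  assumes X: "schedule \<tau>1 \<tau> X" and Y: "schedule \<tau> \<tau>2 Y"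
    and before: "\<And>x. x \<in> X \<Longrightarrow> fst x < \<tau>" and "\<tau>1 \<le> \<tau>" "\<tau> \<le> \<tau>2"
  shows "schedule \<tau>1 \<tau>2 (X \<union> Y)" and "load (X \<union> Y) = load X + load Y"
proof -
  have precedes: "fst x < fst y \<and> finish x \<le> fst y" if "x \<in> X" "y \<in> Y" for x y
    using before[OF that(1)] schedule_finish_le[OF X that(1)] schedule_start_ge[OF Y that(2)]
    by linarith
  then have "fst ` X \<inter> fst ` Y = {}" by fastforce
  then have "X \<inter> Y = {}" by blast
  then show "load (X \<union> Y) = load X + load Y"
    using X Y unfolding schedule_def load_def by (simp add: sum.union_disjoint)
  show "schedule \<tau>1 \<tau>2 (X \<union> Y)"
  proof (rule scheduleI)
    show "finite (X \<union> Y)" using X Y by (simp add: schedule_def)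
    show "inj_on fst (X \<union> Y)"
      using X Y \<open>fst ` X \<inter> fst ` Y = {}\<close> unfolding schedule_def inj_on_Un by blast
    show "admissible_tx a" if "a \<in> X \<union> Y" for a
      using that schedule_admissible_tx[OF X] schedule_admissible_tx[OF Y] by blast
    show "\<tau>1 \<le> fst a" if "a \<in> X \<union> Y" for a
      using that schedule_start_ge[OF X, of a] schedule_start_ge[OF Y, of a] assms(4) by auto
    show "finish a \<le> \<tau>2" if "a \<in> X \<union> Y" for a
      using that schedule_finish_le[OF X, of a] schedule_finish_le[OF Y, of a] assms(5) by auto
  next
    fix a b assume a: "a \<in> X \<union> Y" and b: "b \<in> X \<union> Y" and lt: "fst a < fst b"
    show "finish a \<le> fst b"
    proof (cases "a \<in> X")
      case True
      then show ?thesis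
        using b lt precedes schedule_precedes[OF X] by blast
    next
      case False
      then have "a \<in> Y" "b \<in> Y" using a b lt precedes[of b a] by auto
      then show ?thesis using lt schedule_precedes[OF Y] by blast
    qed
  qed
qed

definition unit_train :: "nat \<Rightarrow> real \<Rightarrow> nat \<Rightarrow> (real \<times> nat) set" where
  "unit_train j T c = (\<lambda>i. (T - real i / R j, 1)) ` {1..c}"

lemma
  assumes "\<theta> j + real c / R j < T" "T \<le> \<theta> (Suc j)" "0 < pbar j"
  shows schedule_unit_train: "schedule (T - real c / R j) T (unit_train j T c)"
    and unit_train_before: "u \<in> unit_train j T c \<Longrightarrow> fst u < T"
    and load_unit_train: "load (unit_train j T c) = c"
proof -
  let ?r = "R j"
  have r: "0 < ?r" by (rule R_pos)
  have inj: "inj_on (\<lambda>i. (T - real i / ?r, 1::nat)) {1..c}"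
    using r by (auto intro: inj_onI)
  then show "load (unit_train j T c) = c"
    unfolding unit_train_def load_def by (simp add: sum.reindex)
  have start: "T - real c / ?r \<le> T - real i / ?r" and before: "T - real i / ?r < T"
    if "i \<in> {1..c}" for i
    using that r by (auto simp: divide_right_mono)
  have slot: "in_slot \<theta> j (T - real i / ?r)" if "i \<in> {1..c}" for i
    using start[OF that] before[OF that] assms(1,2) unfolding in_slot_def by linarith
  have finish_unit: "finish (T - real i / ?r, 1) = T - real (i - 1) / ?r" if "i \<in> {1..c}" for i
    using Delta_in_slot[OF slot[OF that]] that
    by (simp add: finish_def of_nat_diff diff_divide_distrib)
  show "u \<in> unit_train j T c \<Longrightarrow> fst u < T"
    using before unfolding unit_train_def by auto
  show "schedule (T - real c / ?r) T (unit_train j T c)"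
  proof (rule scheduleI)
    show "finite (unit_train j T c)" by (simp add: unit_train_def)
    show "inj_on fst (unit_train j T c)" by (auto simp: unit_train_def inj_on_def)
    show "admissible_tx u" if "u \<in> unit_train j T c" for u
    proof -
      obtain i where i: "i \<in> {1..c}" and u: "u = (T - real i / ?r, 1)"
        using \<open>u \<in> unit_train j T c\<close> unfolding unit_train_def by blast
      show ?thesis
        using slot[OF i] slot_of_eqI[OF slot[OF i]] assms(3) unfolding u admissible_tx_def by auto
    qed
    show "T - real c / ?r \<le> fst u" if "u \<in> unit_train j T c" for u
      using that start by (auto simp: unit_train_def)
    show "finish u \<le> T" if "u \<in> unit_train j T c" for u
      using that finish_unit r by (auto simp: unit_train_def)
  next
    fix u v assume "u \<in> unit_train j T c" "v \<in> unit_train j T c" and lt: "fst u < fst v"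
    then obtain i k where i: "i \<in> {1..c}" "u = (T - real i / ?r, 1)"
      and k: "k \<in> {1..c}" "v = (T - real k / ?r, 1)"
      unfolding unit_train_def by blast
    have "real k < real i" using lt r unfolding i(2) k(2) by (simp add: divide_less_cancel)
    then have "real (i - 1) / ?r \<ge> real k / ?r" using r by (simp add: of_nat_diff divide_right_mono)
    then show "finish u \<le> fst v" using finish_unit[OF i(1)] unfolding i(2) k(2) by simp
  qed
qed

subsection \<open>Schedules and admissible sequences\<close>

lemma admissible_seq_ordered:
  assumes "admissible_seq \<theta> R pbar s" "i < k" "k < length s"
  shows "fst (s!i) < fst (s!k) \<and> finish (s!i) \<le> fst (s!k)"
  using assms(2,3)
proof (induction k)
  case (Suc k)
  have step: "fst (s!k) < fst (s!Suc k) \<and> finish (s!k) \<le> fst (s!Suc k)"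
    using assms(1) Suc.prems(2) unfolding admissible_seq_def finish_def by blast
  show ?case
  proof (cases "i = k")
    case False
    with Suc have "fst (s!i) < fst (s!k) \<and> finish (s!i) \<le> fst (s!k)" by simp
    with step show ?thesis using fst_le_finish[of "s!k"] by linarith
  qed (use step in simp)
qed simp

lemma admissible_seq_fst_nth_inj:
  assumes "admissible_seq \<theta> R pbar s" "i < length s" "k < length s" "fst (s!i) = fst (s!k)"
  shows "i = k"
  using admissible_seq_ordered[OF assms(1), of i k] admissible_seq_ordered[OF assms(1), of k i]
    assms(2-4)
  by (cases i k rule: linorder_cases) auto

definition counted :: "real \<Rightarrow> real \<Rightarrow> (real \<times> nat) list \<Rightarrow> (real \<times> nat) set" where
  "counted \<tau>1 \<tau>2 s = (!) s ` in_window \<theta> R \<tau>1 \<tau>2 s"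

lemma inj_on_nth_in_window:
  assumes "admissible_seq \<theta> R pbar s"
  shows "inj_on ((!) s) (in_window \<theta> R \<tau>1 \<tau>2 s)"
  using admissible_seq_fst_nth_inj[OF assms] by (auto simp: inj_on_def in_window_def)

lemma schedule_counted:
  assumes adm: "admissible_seq \<theta> R pbar s"
  shows "schedule \<tau>1 \<tau>2 (counted \<tau>1 \<tau>2 s)"
proof -
  have ordered: "finish (s!i) \<le> fst (s!k)"
    if "i < length s" "k < length s" "fst (s!i) < fst (s!k)" for i k
  proof -
    have "i < k"
      using admissible_seq_ordered[OF adm, of k i] that by (cases i k rule: linorder_cases) auto
    then show ?thesis using admissible_seq_ordered[OF adm] that(2) by blast
  qed
  show ?thesis
  proof (rule scheduleI)
    show "finite (counted \<tau>1 \<tau>2 s)" unfolding counted_def in_window_def by simp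
    show "inj_on fst (counted \<tau>1 \<tau>2 s)"
      using admissible_seq_fst_nth_inj[OF adm] by (auto simp: inj_on_def counted_def in_window_def)
    show "admissible_tx a" if "a \<in> counted \<tau>1 \<tau>2 s" for a
      using adm that by (auto simp: counted_def in_window_def admissible_seq_def admissible_tx_def)
    show "\<tau>1 \<le> fst a" "finish a \<le> \<tau>2" if "a \<in> counted \<tau>1 \<tau>2 s" for a
      using that by (auto simp: counted_def in_window_def finish_def)
    show "finish a \<le> fst b" if "a \<in> counted \<tau>1 \<tau>2 s" "b \<in> counted \<tau>1 \<tau>2 s" "fst a < fst b"
      for a b
      using ordered that by (auto simp: counted_def in_window_def)
  qed
qed

lemma window_count_eq_load:
  assumes "admissible_seq \<theta> R pbar s"
  shows "window_count \<theta> R \<tau>1 \<tau>2 s = load (counted \<tau>1 \<tau>2 s)"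
  unfolding window_count_def load_def counted_def
  by (simp add: sum.reindex[OF inj_on_nth_in_window[OF assms]])

lemma slot_alloc_eq_slot_load:
  assumes "admissible_seq \<theta> R pbar s"
  shows "slot_alloc \<theta> R \<tau>1 \<tau>2 s j = slot_load (counted \<tau>1 \<tau>2 s) j"
proof -
  let ?K = "{k \<in> in_window \<theta> R \<tau>1 \<tau>2 s. in_slot \<theta> j (fst (s!k))}"
  have "{a \<in> counted \<tau>1 \<tau>2 s. in_slot \<theta> j (fst a)} = (!) s ` ?K"
    unfolding counted_def by blast
  moreover have "inj_on ((!) s) ?K"
    using inj_on_nth_in_window[OF assms] by (rule inj_on_subset) blast
  ultimately show ?thesis
    unfolding slot_alloc_def slot_load_def load_def by (simp add: sum.reindex)
qed

lemma schedule_imp_admissible_seq: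
  assumes sched: "schedule \<tau>1 \<tau>2 A"
  obtains s where "admissible_seq \<theta> R pbar s" "window_count \<theta> R \<tau>1 \<tau>2 s = load A"
proof -
  have "inj_on fst A" using sched by (simp add: schedule_def)
  then have "folding_insort_key (\<le>) (<) A fst" by unfold_locales
  then obtain s where sorted: "sorted_wrt (<) (map fst s)" and set_s: "set s = A"
    and len: "length s = card A"
    by (rule folding_insort_key.finite_set_strict_sorted) (use sched in \<open>auto simp: schedule_def\<close>)
  have dist: "distinct s" using set_s len by (simp add: card_distinct)
  have less: "fst (s!i) < fst (s!k)" if "i < k" "k < length s" for i k
    using sorted that by (simp add: sorted_wrt_iff_nth_less)
  have mem: "s!k \<in> A" if "k < length s" for k
    using set_s that nth_mem by blast
  have tx: "(\<exists>j. in_slot \<theta> j (fst (s!k))) \<and> snd (s!k) \<le> pbar (slot_of \<theta> (fst (s!k)))"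
    if "k < length s" for k
    using mem[OF that] sched unfolding schedule_def admissible_tx_def by blast
  have step: "fst (s!k) < fst (s!Suc k) \<and> finish (s!k) \<le> fst (s!Suc k)"
    if "Suc k < length s" for k
    using less[OF lessI that] mem[of k] mem[OF that] that sched unfolding schedule_def by simp
  have "admissible_seq \<theta> R pbar s"
    unfolding admissible_seq_def using tx step by (simp add: finish_def)
  moreover have "window_count \<theta> R \<tau>1 \<tau>2 s = load A"
  proof -
    have "in_window \<theta> R \<tau>1 \<tau>2 s = {..<length s}"
      using mem sched by (auto simp: in_window_def schedule_def finish_def)
    then have "window_count \<theta> R \<tau>1 \<tau>2 s = sum_list (map snd s)"
      by (simp add: window_count_def sum_list_sum_nth atLeast0LessThan)
    also have "\<dots> = load A"
      unfolding load_def set_s[symmetric] by (rule sum_list_distinct_conv_sum_set[OF dist])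
    finally show ?thesis .
  qed
  ultimately show ?thesis by (rule that)
qed

subsection \<open>Data capacity\<close>

lemma load_le_rate_times_span:
  assumes sched: "schedule \<tau>1 (\<theta> j) A" and "\<tau>1 \<le> \<theta> j"
  shows "real (load A) \<le> Max (R ` {..j}) * (\<theta> j - \<tau>1)"
proof -
  let ?M = "Max (R ` {..j})"
  have tx_bound: "real (snd a) \<le> ?M * Delta \<theta> R (fst a) (snd a)" if "a \<in> A" for a
  proof -
    define i where "i = slot_of \<theta> (fst a)"
    have i: "in_slot \<theta> i (fst a)"
      unfolding i_def using admissible_tx_in_slot schedule_admissible_tx[OF sched that] .
    have "fst a \<le> \<theta> j" using schedule_finish_le[OF sched that] fst_le_finish[of a] by linarith
    with i have "\<theta> i < \<theta> j" unfolding in_slot_def by linarith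
    then have "i \<le> j" using theta_mono by (simp add: strict_mono_less)
    then have "R i \<le> ?M" by simp
    have "real (snd a) = R i * Delta \<theta> R (fst a) (snd a)"
      using Delta_in_slot[OF i] R_pos[of i] by simp
    also have "\<dots> \<le> ?M * Delta \<theta> R (fst a) (snd a)"
      using \<open>R i \<le> ?M\<close> Delta_nonneg by (rule mult_right_mono)
    finally show ?thesis .
  qed
  have "real (load A) = (\<Sum>a\<in>A. real (snd a))" by (simp add: load_def)
  also have "\<dots> \<le> (\<Sum>a\<in>A. ?M * Delta \<theta> R (fst a) (snd a))" by (rule sum_mono) (rule tx_bound)
  also have "\<dots> = ?M * (\<Sum>a\<in>A. Delta \<theta> R (fst a) (snd a))" by (simp add: sum_distrib_left)
  also have "\<dots> \<le> ?M * (\<theta> j - \<tau>1)"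
  proof (rule mult_left_mono)
    show "(\<Sum>a\<in>A. Delta \<theta> R (fst a) (snd a)) \<le> \<theta> j - \<tau>1"
      using sched assms(2) unfolding schedule_def finish_def
      by (intro sum_durations_le_span[where s = fst]) auto
    have "R j \<le> ?M" by simp
    then show "0 \<le> ?M" using R_pos[of j] by linarith
  qed
  finally show ?thesis .
qed

(* data_capacity is a Sup of natural numbers, which would be 0 for an unbounded set. *)
lemma bdd_above_capacity_values:
  assumes "\<tau>1 \<le> \<theta> j"
  shows "bdd_above {n * window_count \<theta> R \<tau>1 (\<theta> j) s | s. admissible_seq \<theta> R pbar s}"
proof (rule bdd_aboveI)
  fix x assume "x \<in> {n * window_count \<theta> R \<tau>1 (\<theta> j) s | s. admissible_seq \<theta> R pbar s}"
  then obtain s where x: "x = n * window_count \<theta> R \<tau>1 (\<theta> j) s" and adm: "admissible_seq \<theta> R pbar s"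
    by blast
  have "real (window_count \<theta> R \<tau>1 (\<theta> j) s) \<le> Max (R ` {..j}) * (\<theta> j - \<tau>1)"
    using load_le_rate_times_span[OF schedule_counted[OF adm] assms] window_count_eq_load[OF adm]
    by simp
  then have "window_count \<theta> R \<tau>1 (\<theta> j) s \<le> nat \<lceil>Max (R ` {..j}) * (\<theta> j - \<tau>1)\<rceil>"
    by linarith
  then show "x \<le> n * nat \<lceil>Max (R ` {..j}) * (\<theta> j - \<tau>1)\<rceil>" using x by simp
qed

lemma load_le_data_capacity:
  assumes "schedule \<tau>1 (\<theta> j) A" "\<tau>1 \<le> \<theta> j"
  shows "n * load A \<le> data_capacity \<theta> R pbar n \<tau>1 (\<theta> j)"
proof -
  obtain s where "admissible_seq \<theta> R pbar s" "window_count \<theta> R \<tau>1 (\<theta> j) s = load A"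
    using schedule_imp_admissible_seq[OF assms(1)] .
  then have "n * load A \<in> {n * window_count \<theta> R \<tau>1 (\<theta> j) s | s. admissible_seq \<theta> R pbar s}"
    by force
  then show ?thesis
    unfolding data_capacity_def by (rule cSup_upper[OF _ bdd_above_capacity_values[OF assms(2)]])
qed

lemma data_capacity_le:
  assumes "\<And>A. schedule \<tau>1 \<tau>2 A \<Longrightarrow> n * load A \<le> B"
  shows "data_capacity \<theta> R pbar n \<tau>1 \<tau>2 \<le> B"
  unfolding data_capacity_def
proof (rule cSup_least)
  have "admissible_seq \<theta> R pbar []" by (simp add: admissible_seq_def)
  then show "{n * window_count \<theta> R \<tau>1 \<tau>2 s | s. admissible_seq \<theta> R pbar s} \<noteq> {}" by blast
next
  fix x assume "x \<in> {n * window_count \<theta> R \<tau>1 \<tau>2 s | s. admissible_seq \<theta> R pbar s}"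
  then obtain s where "x = n * window_count \<theta> R \<tau>1 \<tau>2 s" "admissible_seq \<theta> R pbar s" by blast
  then show "x \<le> B" using assms[OF schedule_counted] window_count_eq_load by simp
qed

subsection \<open>Moving the start of the window inside a slot\<close>

lemma sum_slot_load_eq_load_after:
  assumes sched: "schedule \<tau>1 (\<theta> jf) W"
  shows "(\<Sum>j = i..<jf. slot_load W j) = load {a\<in>W. \<theta> i < fst a}"
proof -
  let ?L = "{a\<in>W. \<theta> i < fst a}"
  let ?slot = "\<lambda>a. slot_of \<theta> (fst a)"
  have in_slot: "in_slot \<theta> (?slot a) (fst a)" if "a \<in> W" for a
    using admissible_tx_in_slot[OF schedule_admissible_tx[OF sched that]] .
  have part: "{a\<in>W. in_slot \<theta> j (fst a)} = {a\<in>?L. ?slot a = j}" if "i \<le> j" for j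
  proof (intro set_eqI iffI)
    fix a assume "a \<in> {a\<in>W. in_slot \<theta> j (fst a)}"
    then show "a \<in> {a\<in>?L. ?slot a = j}"
      using in_slot_less_iff[of j "fst a" i] slot_of_eqI[of j "fst a"] that by auto
  next
    fix a assume "a \<in> {a\<in>?L. ?slot a = j}"
    then show "a \<in> {a\<in>W. in_slot \<theta> j (fst a)}" using in_slot[of a] by auto
  qed
  have "?slot a \<in> {i..<jf}" if "a \<in> ?L" for a
  proof -
    have a: "a \<in> W" "\<theta> i < fst a" using that by auto
    have "fst a \<le> \<theta> jf" using schedule_finish_le[OF sched a(1)] fst_le_finish[of a] by linarith
    then have "\<theta> (?slot a) < \<theta> jf" using in_slot[OF a(1)] unfolding in_slot_def by linarith
    then have "?slot a < jf" using theta_mono by (simp add: strict_mono_less)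
    moreover have "i \<le> ?slot a" using in_slot_less_iff[OF in_slot[OF a(1)]] a(2) by blast
    ultimately show ?thesis by simp
  qed
  then have "load ?L = (\<Sum>j = i..<jf. load {a\<in>?L. ?slot a = j})"
    unfolding load_def using schedule_finite[OF sched]
    by (intro sum.group[symmetric]) auto
  also have "\<dots> = (\<Sum>j = i..<jf. slot_load W j)"
    unfolding slot_load_def by (rule sum.cong) (simp_all add: part)
  finally show ?thesis by simp
qed

lemma slot_load_eq_0:
  assumes sched: "schedule \<tau>1 \<tau>2 W" and "pbar j = 0"
  shows "slot_load W j = 0"
proof -
  have "snd a = 0" if "a \<in> W" "in_slot \<theta> j (fst a)" for a
    using schedule_admissible_tx[OF sched that(1)] slot_of_eqI[OF that(2)] assms(2)
    by (simp add: admissible_tx_def)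
  then show ?thesis using schedule_finite[OF sched] by (simp add: slot_load_def load_def)
qed

lemma last_transmission_in_slot:
  assumes sched: "schedule \<tau>1 \<tau>2 W" and pos: "0 < slot_load W j"
  obtains m where "m \<in> W" "in_slot \<theta> j (fst m)" "0 < snd m"
    and "\<theta> j + real (slot_load W j) / R j < finish m"
proof -
  let ?P = "{a\<in>W. in_slot \<theta> j (fst a) \<and> 0 < snd a}"
  have finP: "finite ?P" using schedule_finite[OF sched] by simp
  have load_P: "slot_load W j = load ?P"
    unfolding slot_load_def load_def using schedule_finite[OF sched]
    by (intro sum.mono_neutral_right) auto
  have "?P \<noteq> {}"
  proof
    assume "?P = {}"
    then have "load ?P = 0" by (simp only: load_def sum.empty)
    with pos load_P show False by simp
  qed
  with finP have "Max (fst ` ?P) \<in> fst ` ?P" "Min (fst ` ?P) \<in> fst ` ?P" by simp_all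
  then obtain m where m: "m \<in> ?P" "fst m = Max (fst ` ?P)"
    and lo: "\<theta> j < Min (fst ` ?P)"
    unfolding in_slot_def by auto
  have last: "finish a \<le> finish m" if "a \<in> ?P" for a
  proof (rule schedule_finish_mono[OF sched])
    show "fst a \<le> fst m" unfolding m(2) using finP that by (intro Max_ge) auto
  qed (use that m(1) in auto)
  have "(\<Sum>a\<in>?P. Delta \<theta> R (fst a) (snd a)) \<le> finish m - Min (fst ` ?P)"
  proof (rule sum_durations_le_span[where s = fst, OF finP])
    show "inj_on fst ?P" using schedule_inj_on_fst[OF sched] by (rule inj_on_subset) blast
    show "\<forall>a\<in>?P. \<forall>b\<in>?P. fst a < fst b \<longrightarrow> fst a + Delta \<theta> R (fst a) (snd a) \<le> fst b"
      using schedule_precedes[OF sched] unfolding finish_def by blast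
    show "\<forall>a\<in>?P. Min (fst ` ?P) \<le> fst a \<and> fst a + Delta \<theta> R (fst a) (snd a) \<le> finish m"
      using last finP unfolding finish_def by simp
    show "Min (fst ` ?P) \<le> finish m"
      using finP m(1) fst_le_finish[of m] by (meson Min_le finite_imageI image_eqI order_trans)
  qed
  moreover have "(\<Sum>a\<in>?P. Delta \<theta> R (fst a) (snd a)) = (\<Sum>a\<in>?P. real (snd a) / R j)"
    by (rule sum.cong) (auto simp: Delta_in_slot)
  moreover have "\<dots> = real (load ?P) / R j"
    by (simp add: load_def sum_divide_distrib)
  ultimately have "\<theta> j + real (slot_load W j) / R j < finish m"
    unfolding load_P using lo by linarith
  with m(1) show ?thesis using that by blast
qed

(* If k < snd m, one transmission of k packets at max t (fst m) does it; otherwise m is kept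
   and preceded by k - snd m single packets. *)
lemma schedule_in_slot_before:
  assumes m: "admissible_tx m" "in_slot \<theta> j (fst m)" "0 < snd m"
    and t: "\<theta> j \<le> t" "t \<le> \<theta> (Suc j)" and key: "t + real k / R j < finish m"
  obtains C where "schedule t (finish m) C" "load C = k" "\<And>u. u \<in> C \<Longrightarrow> fst u < finish m"
proof -
  let ?r = "R j"
  have r: "0 < ?r" by (rule R_pos)
  have pm: "snd m \<le> pbar j" using m(1) slot_of_eqI[OF m(2)] by (simp add: admissible_tx_def)
  have fin_m: "finish m = fst m + real (snd m) / ?r" by (rule finish_in_slot[OF m(2)])
  have "fst m < finish m" using fin_m m(3) r by simp
  show ?thesis
  proof (cases "snd m \<le> k")
    case True
    define c where "c = k - snd m"
    let ?U = "unit_train j (fst m) c"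
    have start: "fst m - real c / ?r = finish m - real k / ?r"
      using True unfolding c_def fin_m by (simp add: of_nat_diff diff_divide_distrib)
    have train: "\<theta> j + real c / ?r < fst m" "fst m \<le> \<theta> (Suc j)" "0 < pbar j"
      using start key t(1) m(2,3) pm unfolding in_slot_def by linarith+
    have "t \<le> fst m - real c / ?r" using start key by linarith
    then have U: "schedule t (fst m) ?U"
      using schedule_mono[OF schedule_unit_train[OF train]] by simp
    have "0 \<le> real c / ?r" using r by simp
    with \<open>t \<le> fst m - real c / ?r\<close> have "t \<le> fst m" by linarith
    have M: "schedule (fst m) (finish m) {m}"
      using m(1) by (rule schedule_singleton) simp_all
    note C = schedule_append[OF U M unit_train_before[OF train] \<open>t \<le> fst m\<close> fst_le_finish]
    show ?thesis
    proof (rule that)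
      show "schedule t (finish m) (?U \<union> {m})" by (rule C(1))
      show "load (?U \<union> {m}) = k"
        using C(2) load_unit_train[OF train] True unfolding c_def by (simp add: load_def)
      show "fst u < finish m" if "u \<in> ?U \<union> {m}" for u
        using that unit_train_before[OF train] \<open>fst m < finish m\<close> by fastforce
    qed
  next
    case False
    define s where "s = max t (fst m)"
    have slot_s: "in_slot \<theta> j s" using m(2) t(2) unfolding s_def in_slot_def by auto
    have "real k / ?r < real (snd m) / ?r" using False r by (simp add: divide_strict_right_mono)
    then have end_s: "s + real k / ?r < finish m" using key fin_m unfolding s_def by linarith
    have adm: "admissible_tx (s, k)"
      using slot_s slot_of_eqI[OF slot_s] False pm by (auto simp: admissible_tx_def)
    have "schedule t (finish m) {(s, k)}"
      using adm by (rule schedule_singleton)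
        (use finish_in_slot[of j "(s, k)"] slot_s end_s s_def in auto)
    moreover have "fst (s, k) < finish m"
      using end_s divide_nonneg_pos[OF of_nat_0_le_iff r, of k] by simp
    ultimately show ?thesis using that[of "{(s, k)}"] by (simp add: load_def)
  qed
qed

lemma data_capacity_prefix:
  assumes "j < jf" "\<theta> j \<le> t" "t \<le> \<theta> (Suc j)"
    and c: "c = 0 \<or> real c < R j * (t - \<theta> j) \<and> 0 < pbar j"
  shows "n * c + data_capacity \<theta> R pbar n t (\<theta> jf) \<le> data_capacity \<theta> R pbar n (\<theta> j) (\<theta> jf)"
proof -
  let ?U = "unit_train j t c"
  have "\<theta> (Suc j) \<le> \<theta> jf" using theta_mono \<open>j < jf\<close> by (simp add: strict_mono_less_eq)
  then have "t \<le> \<theta> jf" "\<theta> j \<le> \<theta> jf" using assms(2,3) by linarith+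
  have U: "schedule (\<theta> j) t ?U \<and> (\<forall>u\<in>?U. fst u < t) \<and> load ?U = c"
  proof (cases "c = 0")
    case True
    then show ?thesis by (simp add: unit_train_def schedule_empty load_def)
  next
    case False
    with c have "real c < R j * (t - \<theta> j)" "0 < pbar j" by auto
    have "real c / R j < R j * (t - \<theta> j) / R j"
      using \<open>real c < R j * (t - \<theta> j)\<close> R_pos by (rule divide_strict_right_mono)
    then have train: "\<theta> j + real c / R j < t" "t \<le> \<theta> (Suc j)" "0 < pbar j"
      using R_pos[of j] assms(3) \<open>0 < pbar j\<close> by simp_all
    then have "\<theta> j \<le> t - real c / R j" by linarith
    then show ?thesis
      using schedule_mono[OF schedule_unit_train[OF train]] unit_train_before[OF train]
        load_unit_train[OF train] by simp
  qed
  have bound: "n * c + n * load A \<le> data_capacity \<theta> R pbar n (\<theta> j) (\<theta> jf)"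
    if "schedule t (\<theta> jf) A" for A
  proof -
    from U have "schedule (\<theta> j) t ?U" "\<And>u. u \<in> ?U \<Longrightarrow> fst u < t" by auto
    note UA = schedule_append[OF this(1) that this(2) assms(2) \<open>t \<le> \<theta> jf\<close>]
    show ?thesis
      using load_le_data_capacity[OF UA(1) \<open>\<theta> j \<le> \<theta> jf\<close>, of n] UA(2) U
      by (simp add: algebra_simps)
  qed
  have "data_capacity \<theta> R pbar n t (\<theta> jf) \<le> data_capacity \<theta> R pbar n (\<theta> j) (\<theta> jf) - n * c"
  proof (rule data_capacity_le)
    fix A assume "schedule t (\<theta> jf) A"
    from bound[OF this] show "n * load A \<le> data_capacity \<theta> R pbar n (\<theta> j) (\<theta> jf) - n * c"
      by linarith
  qed
  moreover have "n * c \<le> data_capacity \<theta> R pbar n (\<theta> j) (\<theta> jf)"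
    using bound[OF schedule_empty] by simp
  ultimately show ?thesis by linarith
qed

lemma data_capacity_suffix:
  assumes sched: "schedule (\<theta> j) (\<theta> jf) W" and "j < jf" and t: "\<theta> j \<le> t" "t \<le> \<theta> (Suc j)"
  shows "n * (nat \<lfloor>real (slot_load W j) - R j * (t - \<theta> j)\<rfloor> + load {a\<in>W. \<theta> (Suc j) < fst a})
           \<le> data_capacity \<theta> R pbar n t (\<theta> jf)"
proof -
  let ?k = "nat \<lfloor>real (slot_load W j) - R j * (t - \<theta> j)\<rfloor>"
  let ?L = "{a\<in>W. \<theta> (Suc j) < fst a}"
  have "\<theta> (Suc j) \<le> \<theta> jf" using theta_mono \<open>j < jf\<close> by (simp add: strict_mono_less_eq)
  then have "t \<le> \<theta> jf" using t(2) by linarith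
  have late: "schedule \<tau> (\<theta> jf) ?L" if "\<And>a. a \<in> ?L \<Longrightarrow> \<tau> \<le> fst a" for \<tau>
  proof (rule schedule_later_start)
    show "schedule (\<theta> j) (\<theta> jf) ?L" using sched by (rule schedule_subset) blast
  qed (rule that)
  show ?thesis
  proof (cases "?k = 0")
    case True
    have "schedule t (\<theta> jf) ?L" using t(2) by (intro late) auto
    then show ?thesis using load_le_data_capacity[OF _ \<open>t \<le> \<theta> jf\<close>] True by simp
  next
    case False
    have k: "real ?k \<le> real (slot_load W j) - R j * (t - \<theta> j)" using False by linarith
    moreover have "0 \<le> R j * (t - \<theta> j)" using R_pos[of j] t(1) by simp
    ultimately have "0 < slot_load W j" using False by linarith
    then obtain m where m: "m \<in> W" "in_slot \<theta> j (fst m)" "0 < snd m"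
      and last: "\<theta> j + real (slot_load W j) / R j < finish m"
      by (rule last_transmission_in_slot[OF sched])
    have "real ?k / R j \<le> real (slot_load W j) / R j - (t - \<theta> j)"
      using k R_pos[of j] by (simp add: field_simps)
    then have key: "t + real ?k / R j < finish m" using last by linarith
    obtain C where C: "schedule t (finish m) C" "load C = ?k" "\<And>u. u \<in> C \<Longrightarrow> fst u < finish m"
      by (rule schedule_in_slot_before[OF schedule_admissible_tx[OF sched m(1)] m(2,3) t key]) blast
    have "finish m \<le> fst b" if "b \<in> ?L" for b
      using schedule_precedes[OF sched m(1), of b] that m(2) unfolding in_slot_def by auto
    then have L: "schedule (finish m) (\<theta> jf) ?L" by (rule late)
    have "0 \<le> real ?k / R j" using R_pos[of j] by simp
    then have "t \<le> finish m" using key by linarith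
    note CL = schedule_append[OF C(1) L C(3) this schedule_finish_le[OF sched m(1)]]
    show ?thesis using load_le_data_capacity[OF CL(1) \<open>t \<le> \<theta> jf\<close>] CL(2) C(2) by simp
  qed
qed

lemma data_capacity_later_start:
  assumes sched: "schedule (\<theta> j) (\<theta> jf) W" and "j < jf" "\<theta> j \<le> t" "t \<le> \<theta> (Suc j)"
    and opt: "data_capacity \<theta> R pbar n (\<theta> j) (\<theta> jf)
                = n * (slot_load W j + load {a\<in>W. \<theta> (Suc j) < fst a})"
  defines "Dhat \<equiv> n * (nat \<lfloor>real (slot_load W j) - R j * (t - \<theta> j)\<rfloor>
                        + load {a\<in>W. \<theta> (Suc j) < fst a})"
  shows "Dhat \<le> data_capacity \<theta> R pbar n t (\<theta> jf)"
    and "data_capacity \<theta> R pbar n t (\<theta> jf) \<le> Dhat + n"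
proof -
  show "Dhat \<le> data_capacity \<theta> R pbar n t (\<theta> jf)"
    unfolding Dhat_def using data_capacity_suffix[OF assms(1-4)] .
  define x where "x = R j * (t - \<theta> j)"
  define k where "k = nat \<lfloor>real (slot_load W j) - x\<rfloor>"
  define c where "c = (if pbar j = 0 then 0 else nat (\<lceil>x\<rceil> - 1))"
  have "c = 0 \<or> real c < x \<and> 0 < pbar j"
    unfolding c_def by (cases "0 < \<lceil>x\<rceil> - 1") (auto, linarith)
  then have "n * c + data_capacity \<theta> R pbar n t (\<theta> jf)
      \<le> n * (slot_load W j + load {a\<in>W. \<theta> (Suc j) < fst a})"
    unfolding x_def opt[symmetric] using data_capacity_prefix[OF assms(2-4)] by blast
  moreover have "slot_load W j \<le> c + k + 1"
    using le_nat_ceiling_pred_add_nat_floor[of "slot_load W j" x] slot_load_eq_0[OF sched]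
    unfolding c_def k_def by auto
  then have "n * slot_load W j \<le> n * c + n * k + n"
    using mult_le_mono2[of "slot_load W j" "c + k + 1" n] by (simp add: algebra_simps)
  ultimately show "data_capacity \<theta> R pbar n t (\<theta> jf) \<le> Dhat + n"
    unfolding Dhat_def k_def x_def by (simp add: algebra_simps)
qed

end

theorem proposition2:
  fixes \<theta> :: "nat \<Rightarrow> real" and R :: "nat \<Rightarrow> real" and pbar :: "nat \<Rightarrow> nat"
    and n :: nat and j0 jf :: nat and \<phi> :: "nat \<Rightarrow> nat" and t :: real
  assumes theta_mono: "strict_mono \<theta>"
    and R_pos: "\<And>j. R j > 0"
    and n_pos: "n > 0"
    and j_lt: "j0 < jf"
    and opt: "\<exists>s. admissible_seq \<theta> R pbar s \<and>
               n * window_count \<theta> R (\<theta> j0) (\<theta> jf) s = data_capacity \<theta> R pbar n (\<theta> j0) (\<theta> jf) \<and>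
               (\<forall>j \<in> {j0..<jf}. \<phi> j = slot_alloc \<theta> R (\<theta> j0) (\<theta> jf) s j)"
    and alloc_sum: "data_capacity \<theta> R pbar n (\<theta> j0) (\<theta> jf) = n * (\<Sum>j = j0..<jf. \<phi> j)"
    and t_in: "\<theta> j0 \<le> t" "t < \<theta> (Suc j0)"
  shows "0 \<le> real (data_capacity \<theta> R pbar n t (\<theta> jf)) -
              (max 0 (real n * of_int \<lfloor>real (\<phi> j0) - R j0 * (t - \<theta> j0)\<rfloor>)
               + real n * (\<Sum>j = Suc j0..<jf. real (\<phi> j)))
       \<and> real (data_capacity \<theta> R pbar n t (\<theta> jf)) -
              (max 0 (real n * of_int \<lfloor>real (\<phi> j0) - R j0 * (t - \<theta> j0)\<rfloor>)
               + real n * (\<Sum>j = Suc j0..<jf. real (\<phi> j))) \<le> real n"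
proof -
  interpret channel \<theta> R pbar using theta_mono R_pos by unfold_locales
  obtain s where adm: "admissible_seq \<theta> R pbar s"
    and alloc: "\<forall>j \<in> {j0..<jf}. \<phi> j = slot_alloc \<theta> R (\<theta> j0) (\<theta> jf) s j"
    using opt by blast
  define W where "W = counted (\<theta> j0) (\<theta> jf) s"
  let ?late = "load {a\<in>W. \<theta> (Suc j0) < fst a}"
  have W: "schedule (\<theta> j0) (\<theta> jf) W" unfolding W_def by (rule schedule_counted[OF adm])
  have \<phi>: "\<phi> j = slot_load W j" if "j \<in> {j0..<jf}" for j
    using alloc that slot_alloc_eq_slot_load[OF adm] unfolding W_def by simp
  have \<phi>0: "\<phi> j0 = slot_load W j0" using \<phi> j_lt by simp
  have rest: "(\<Sum>j = Suc j0..<jf. \<phi> j) = ?late"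
    unfolding sum_slot_load_eq_load_after[OF W, symmetric] by (rule sum.cong) (auto intro: \<phi>)
  have "data_capacity \<theta> R pbar n (\<theta> j0) (\<theta> jf) = n * (slot_load W j0 + ?late)"
    using alloc_sum rest \<phi>0 j_lt by (simp add: sum.atLeast_Suc_lessThan)
  note bounds = data_capacity_later_start[OF W j_lt t_in(1) less_imp_le[OF t_in(2)] this]
  have "max 0 (real n * of_int \<lfloor>real (\<phi> j0) - R j0 * (t - \<theta> j0)\<rfloor>)
      + real n * (\<Sum>j = Suc j0..<jf. real (\<phi> j))
      = real (n * (nat \<lfloor>real (slot_load W j0) - R j0 * (t - \<theta> j0)\<rfloor> + ?late))"
    unfolding max_0_mult_of_int of_nat_sum[symmetric] rest \<phi>0 by (simp add: algebra_simps)
  then show ?thesis using bounds[THEN of_nat_mono[where 'a = real]] by simp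
qed

end
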